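(* Let $g:[a,b]\to\mathbb R$ be a derivator with $D_g$ finite; write $D_g=\{x_1<x_2<\dots<x_{n-1}\}$ and set $x_0=a$, $x_n=b$ (so $x_1=a$ if $a\in D_g$). Then the linear map $$\Psi:\mathrm{UC}_g([a,b])\to\mathrm{UC}_{g^C}([x_0,x_1])\oplus\bigoplus_{j=2}^n\mathrm{UC}_{g^C}((x_{j-1},x_j]),\qquad \Psi(f)=\big(f|_{[x_0,x_1]},f|_{(x_1,x_2]},\dots,f|_{(x_{n-1},x_n]}\big),$$ is an isometric isomorphism, where the direct sum carries the norm $\|(v_1,\dots,v_n)\|=\max_j\|v_j\|_\infty$.
   Context: $\mathbb F\in\{\mathbb R,\mathbb C\}$. A derivator is a nondecreasing, left-continuous $g:[a,b]\to\mathbb R$. For $x\in[a,b)$, $\Delta g(x)=g(x^+)-g(x)$ and $D_g=\{x\in[a,b):\Delta g(x)>0\}$. The jump part is $g^B(x)=\sum_{y\in[a,x)\cap D_g}\Delta g(y)$ and the continuous part is $g^C=g-g^B$ (a continuous derivator). For a derivator $h$ and a set $J\subset[a,b]$ (here an interval), $\mathrm{UC}_h(J)$ is the space of functions $f:J\to\mathbb F$ that are uniformly $h$-continuous on $J$ (for every $\varepsilon>0$ there is $\delta>0$ such that for all $x,y\in J$, $|h(x)-h(y)|<\delta$ implies $|f(x)-f(y)|<\varepsilon$), with the supremum norm over $J$. $\mathrm{UC}_g([a,b])$ is this space for $h=g$, $J=[a,b]$. *)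

theory Defs
  imports "HOL-Analysis.Analysis"
begin

definition derivator :: "(real \<Rightarrow> real) \<Rightarrow> real \<Rightarrow> real \<Rightarrow> bool" where
  "derivator g a b \<longleftrightarrow> mono_on {a..b} g \<and>
     (\<forall>x\<in>{a<..b}. (g \<longlongrightarrow> g x) (at_left x))"

definition jump :: "(real \<Rightarrow> real) \<Rightarrow> real \<Rightarrow> real" where
  "jump g x = Lim (at_right x) g - g x"

definition Dg :: "(real \<Rightarrow> real) \<Rightarrow> real \<Rightarrow> real \<Rightarrow> real set" where
  "Dg g a b = {x \<in> {a..<b}. jump g x > 0}"

definition gB :: "(real \<Rightarrow> real) \<Rightarrow> real \<Rightarrow> real \<Rightarrow> real \<Rightarrow> real" where
  "gB g a b x = infsum (jump g) ({a..<x} \<inter> Dg g a b)"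

definition gC :: "(real \<Rightarrow> real) \<Rightarrow> real \<Rightarrow> real \<Rightarrow> real \<Rightarrow> real" where
  "gC g a b x = g x - gB g a b x"

definition unif_cont_wrt ::
  "(real \<Rightarrow> real) \<Rightarrow> real set \<Rightarrow> (real \<Rightarrow> 'a::real_normed_vector) \<Rightarrow> bool" where
  "unif_cont_wrt h J f \<longleftrightarrow>
     (\<forall>\<epsilon>>0. \<exists>\<delta>>0. \<forall>x\<in>J. \<forall>y\<in>J. \<bar>h x - h y\<bar> < \<delta> \<longrightarrow> norm (f x - f y) < \<epsilon>)"

text \<open>The space UC_h(J); functions on J are represented extensionally
  (value 0 outside J).\<close>
definition UC :: "(real \<Rightarrow> real) \<Rightarrow> real set \<Rightarrow> (real \<Rightarrow> 'a::real_normed_vector) set" where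
  "UC h J = {f. (\<forall>x. x \<notin> J \<longrightarrow> f x = 0) \<and> unif_cont_wrt h J f}"

definition restr :: "real set \<Rightarrow> (real \<Rightarrow> 'a::zero) \<Rightarrow> real \<Rightarrow> 'a" where
  "restr J f = (\<lambda>x. if x \<in> J then f x else 0)"

definition supnorm :: "real set \<Rightarrow> (real \<Rightarrow> 'a::real_normed_vector) \<Rightarrow> real" where
  "supnorm J f = (SUP x\<in>J. norm (f x))"

definition nparts :: "(real \<Rightarrow> real) \<Rightarrow> real \<Rightarrow> real \<Rightarrow> nat" where
  "nparts g a b = card (Dg g a b) + 1"

definition node :: "(real \<Rightarrow> real) \<Rightarrow> real \<Rightarrow> real \<Rightarrow> nat \<Rightarrow> real" where
  "node g a b j = (if j = 0 then a else if j = nparts g a b then b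
                   else sorted_list_of_set (Dg g a b) ! (j - 1))"

definition piece :: "(real \<Rightarrow> real) \<Rightarrow> real \<Rightarrow> real \<Rightarrow> nat \<Rightarrow> real set" where
  "piece g a b j = (if j = 1 then {node g a b 0 .. node g a b 1}
                    else {node g a b (j - 1) <.. node g a b j})"

definition Psi :: "(real \<Rightarrow> real) \<Rightarrow> real \<Rightarrow> real \<Rightarrow> (real \<Rightarrow> 'a::zero) \<Rightarrow> nat \<Rightarrow> real \<Rightarrow> 'a" where
  "Psi g a b f = (\<lambda>j. if j \<in> {1..nparts g a b} then restr (piece g a b j) f else (\<lambda>_. 0))"

end

theory Submission
  imports Defs
begin

(* The points of D_g cut [a,b] into finitely many pieces on each of which the jump part g^B is
   constant; there g and g^C differ by a constant, so uniform g-continuity and uniform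
   g^C-continuity on a piece coincide. Points of different pieces are separated by a jump of g,
   hence |g x - g y| is at least the smallest jump, and functions that are uniformly continuous
   on every piece glue to a uniformly g-continuous function on [a,b]. The norm identity is
   "sup over a finite union = max of the sups"; the required boundedness holds because a
   uniformly g-continuous function factors through a uniformly continuous function on the
   bounded set g([a,b]). *)

lemma unif_cont_wrt_cong:
  assumes "\<And>x y. x \<in> J \<Longrightarrow> y \<in> J \<Longrightarrow> h' x - h' y = h x - h y"
    and "\<And>x. x \<in> J \<Longrightarrow> f' x = f x"
  shows "unif_cont_wrt h' J f' \<longleftrightarrow> unif_cont_wrt h J f"
  unfolding unif_cont_wrt_def using assms by (intro all_cong ex_cong) auto

lemma unif_cont_wrt_subset:
  "unif_cont_wrt h J f \<Longrightarrow> J' \<subseteq> J \<Longrightarrow> unif_cont_wrt h J' f"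
  unfolding unif_cont_wrt_def by (meson subsetD)

lemma restr_in_UC_iff: "restr J f \<in> UC h J \<longleftrightarrow> unif_cont_wrt h J f"
proof -
  have "unif_cont_wrt h J (restr J f) \<longleftrightarrow> unif_cont_wrt h J f"
    by (rule unif_cont_wrt_cong) (auto simp: restr_def)
  then show ?thesis
    by (simp add: UC_def restr_def)
qed

lemma unif_cont_wrt_norm:
  "unif_cont_wrt h J f \<Longrightarrow> unif_cont_wrt h J (\<lambda>x. norm (f x))"
  unfolding unif_cont_wrt_def real_norm_def
  by (meson le_less_trans norm_triangle_ineq3)

lemma unif_cont_wrt_factor_through:
  fixes f :: "real \<Rightarrow> 'a::real_normed_vector"
  assumes "unif_cont_wrt h J f"
  shows "uniformly_continuous_on (h ` J) (f \<circ> inv_into J h)"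
    and "\<And>x. x \<in> J \<Longrightarrow> f x = (f \<circ> inv_into J h) (h x)"
proof -
  have eq: "f x = f y" if "x \<in> J" "y \<in> J" "h x = h y" for x y
  proof -
    have "norm (f x - f y) < e" if "e > 0" for e
      using assms \<open>e > 0\<close> \<open>x \<in> J\<close> \<open>y \<in> J\<close> \<open>h x = h y\<close> unfolding unif_cont_wrt_def by fastforce
    then show ?thesis
      by (metis eq_iff_diff_eq_0 norm_eq_zero order_less_irrefl zero_less_norm_iff)
  qed
  have factor: "f (inv_into J h (h x)) = f x" if "x \<in> J" for x
    using that by (auto intro: eq inv_into_into f_inv_into_f)
  show "f x = (f \<circ> inv_into J h) (h x)" if "x \<in> J" for x
    using factor[OF that] by simp
  show "uniformly_continuous_on (h ` J) (f \<circ> inv_into J h)"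
    unfolding uniformly_continuous_on_def dist_norm real_norm_def
  proof (intro allI impI)
    fix e :: real assume "e > 0"
    then obtain d where "d > 0" and "\<forall>x\<in>J. \<forall>y\<in>J. \<bar>h x - h y\<bar> < d \<longrightarrow> norm (f x - f y) < e"
      using assms unfolding unif_cont_wrt_def by blast
    then show "\<exists>d>0. \<forall>s\<in>h ` J. \<forall>t\<in>h ` J. \<bar>t - s\<bar> < d \<longrightarrow>
        norm ((f \<circ> inv_into J h) t - (f \<circ> inv_into J h) s) < e"
      by (auto simp: factor)
  qed
qed

lemma unif_cont_wrt_bounded:
  fixes f :: "real \<Rightarrow> 'a::real_normed_vector"
  assumes "bounded (h ` J)" and "unif_cont_wrt h J f"
  shows "bounded (f ` J)"
proof -
  let ?F = "(\<lambda>x. norm (f x)) \<circ> inv_into J h"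
  have uc: "uniformly_continuous_on (h ` J) ?F" and F: "\<And>x. x \<in> J \<Longrightarrow> norm (f x) = ?F (h x)"
    using unif_cont_wrt_factor_through[OF unif_cont_wrt_norm[OF assms(2)]] by blast+
  have "bounded (?F ` h ` J)"
    by (rule bounded_uniformly_continuous_image[OF uc assms(1)])
  then obtain B where "\<forall>x\<in>J. norm (?F (h x)) \<le> B"
    by (auto simp: bounded_iff)
  then show ?thesis
    unfolding bounded_iff using F by fastforce
qed

lemma unif_cont_wrt_glue:
  assumes "finite I" and uc: "\<And>j. j \<in> I \<Longrightarrow> unif_cont_wrt h (P j) f"
    and "\<delta> > 0"
    and separated: "\<And>i j x y. i \<in> I \<Longrightarrow> j \<in> I \<Longrightarrow> x \<in> P i \<Longrightarrow> y \<in> P j \<Longrightarrow>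
      \<bar>h x - h y\<bar> < \<delta> \<Longrightarrow> i = j"
  shows "unif_cont_wrt h (\<Union>j\<in>I. P j) f"
  unfolding unif_cont_wrt_def
proof (intro allI impI)
  fix e :: real assume "e > 0"
  then have "\<forall>j\<in>I. \<exists>d>0. \<forall>x\<in>P j. \<forall>y\<in>P j. \<bar>h x - h y\<bar> < d \<longrightarrow> norm (f x - f y) < e"
    using uc unfolding unif_cont_wrt_def by blast
  then obtain d where d: "\<And>j. j \<in> I \<Longrightarrow> d j > 0"
    and d_uc: "\<And>j x y. j \<in> I \<Longrightarrow> x \<in> P j \<Longrightarrow> y \<in> P j \<Longrightarrow> \<bar>h x - h y\<bar> < d j \<Longrightarrow> norm (f x - f y) < e"
    by metis
  define d0 where "d0 = Min (insert \<delta> (d ` I))"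
  have fin: "finite (insert \<delta> (d ` I))"
    using \<open>finite I\<close> by simp
  have "d0 \<le> \<delta>" and d0_le: "\<And>j. j \<in> I \<Longrightarrow> d0 \<le> d j"
    unfolding d0_def using fin by auto
  show "\<exists>d>0. \<forall>x\<in>\<Union>j\<in>I. P j. \<forall>y\<in>\<Union>j\<in>I. P j. \<bar>h x - h y\<bar> < d \<longrightarrow> norm (f x - f y) < e"
  proof (intro exI[of _ d0] conjI ballI impI)
    show "d0 > 0"
      unfolding d0_def using fin \<open>\<delta> > 0\<close> d by auto
  next
    fix x y assume "x \<in> (\<Union>j\<in>I. P j)" "y \<in> (\<Union>j\<in>I. P j)" and close: "\<bar>h x - h y\<bar> < d0"
    then obtain i j where ij: "i \<in> I" "j \<in> I" "x \<in> P i" "y \<in> P j"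
      by blast
    with close \<open>d0 \<le> \<delta>\<close> have "i = j"
      by (intro separated) auto
    with ij close d0_le show "norm (f x - f y) < e"
      by (intro d_uc) force+
  qed
qed

lemma supnorm_restr: "supnorm J (restr J f) = supnorm J f"
  unfolding supnorm_def restr_def by (rule SUP_cong) auto

lemma supnorm_UN:
  fixes f :: "real \<Rightarrow> 'a::real_normed_vector"
  assumes "finite I" "I \<noteq> {}" "\<And>j. j \<in> I \<Longrightarrow> P j \<noteq> {}"
    and "bounded (f ` (\<Union>j\<in>I. P j))"
  shows "supnorm (\<Union>j\<in>I. P j) f = Max ((\<lambda>j. supnorm (P j) f) ` I)"
proof -
  have "bdd_above (\<Union>j\<in>I. (\<lambda>x. norm (f x)) ` P j)"
    using assms(4) unfolding bounded_iff bdd_above_def by auto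
  then have "supnorm (\<Union>j\<in>I. P j) f = (SUP j\<in>I. supnorm (P j) f)"
    unfolding supnorm_def using assms(2,3) by (intro cSUP_UNION) auto
  also have "\<dots> = Max ((\<lambda>j. supnorm (P j) f) ` I)"
    using assms(1,2) by (simp add: cSup_eq_Max)
  finally show ?thesis .
qed

lemma jump_le_diff:
  assumes mono: "mono_on {a..b} g" and "a \<le> p" "p < b"
    and "a \<le> x" "x \<le> p" "p < y" "y \<le> b"
  shows "jump g p \<le> g y - g x"
proof -
  let ?R = "{p<..} \<inter> {a..b}"
  have "(g \<longlongrightarrow> Inf (g ` ?R)) (at p within ?R)"
    by (rule Lim_right_bound[where K = "g p"]) (use assms in \<open>auto intro: mono_onD[OF mono]\<close>)
  moreover have "at p within ?R = at_right p"
    by (rule at_within_nhd[of p "{..<b}"]) (use assms in auto)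
  ultimately have "Lim (at_right p) g = Inf (g ` ?R)"
    by (intro tendsto_Lim) auto
  moreover have "Inf (g ` ?R) \<le> g y"
  proof (rule cInf_lower)
    show "bdd_below (g ` ?R)"
      by (rule bdd_belowI2[where m = "g p"]) (use assms in \<open>auto intro: mono_onD[OF mono]\<close>)
  qed (use assms in auto)
  moreover have "g x \<le> g p"
    by (rule mono_onD[OF mono]) (use assms in auto)
  ultimately show ?thesis
    unfolding jump_def by simp
qed

lemma Psi_linear:
  fixes f h :: "real \<Rightarrow> 'a::ring"
  shows "Psi g a b (\<lambda>x. c * f x + h x) = (\<lambda>j x. c * Psi g a b f j x + Psi g a b h j x)"
  by (auto simp: Psi_def restr_def fun_eq_iff)

locale finite_jumps =
  fixes g :: "real \<Rightarrow> real" and a b :: real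
  assumes le: "a \<le> b" and finite_Dg: "finite (Dg g a b)"
begin

lemma Dg_subset: "Dg g a b \<subseteq> {a..<b}"
  by (auto simp: Dg_def)

lemma node_0 [simp]: "node g a b 0 = a"
  by (simp add: node_def)

lemma nparts_pos: "1 \<le> nparts g a b"
  by (simp add: nparts_def)

lemma node_nparts [simp]: "node g a b (nparts g a b) = b"
  by (simp add: node_def nparts_def)

lemma node_inner: "j \<in> {1..<nparts g a b} \<Longrightarrow> node g a b j = sorted_list_of_set (Dg g a b) ! (j - 1)"
  by (simp add: node_def)

lemma node_in_Dg: "j \<in> {1..<nparts g a b} \<Longrightarrow> node g a b j \<in> Dg g a b"
proof -
  assume j: "j \<in> {1..<nparts g a b}"
  then have "j - 1 < length (sorted_list_of_set (Dg g a b))"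
    by (auto simp: nparts_def)
  then have "sorted_list_of_set (Dg g a b) ! (j - 1) \<in> set (sorted_list_of_set (Dg g a b))"
    by (rule nth_mem)
  with j show ?thesis
    using finite_Dg by (simp add: node_inner)
qed

lemma Dg_node: "z \<in> Dg g a b \<Longrightarrow> \<exists>j\<in>{1..<nparts g a b}. z = node g a b j"
proof -
  assume "z \<in> Dg g a b"
  then obtain i where "i < card (Dg g a b)" "z = sorted_list_of_set (Dg g a b) ! i"
    using finite_Dg by (metis in_set_conv_nth length_sorted_list_of_set set_sorted_list_of_set)
  then show ?thesis
    by (intro bexI[of _ "i + 1"]) (auto simp: node_inner nparts_def)
qed

lemma node_strict_mono: "1 \<le> i \<Longrightarrow> i < k \<Longrightarrow> k \<le> nparts g a b \<Longrightarrow> node g a b i < node g a b k"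
proof -
  assume ik: "1 \<le> i" "i < k" "k \<le> nparts g a b"
  show ?thesis
  proof (cases "k = nparts g a b")
    case True
    then show ?thesis
      using node_in_Dg[of i] Dg_subset ik by auto
  next
    case False
    have "sorted_wrt (<) (sorted_list_of_set (Dg g a b))"
      by (rule strict_sorted_list_of_set)
    with False ik show ?thesis
      by (simp add: node_inner nparts_def sorted_wrt_nth_less)
  qed
qed

lemma node_in_interval: "j \<le> nparts g a b \<Longrightarrow> node g a b j \<in> {a..b}"
proof -
  assume j: "j \<le> nparts g a b"
  consider "j = 0" | "j = nparts g a b" | "j \<in> {1..<nparts g a b}"
    using j by fastforce
  then show ?thesis
  proof cases
    case 3
    then show ?thesis
      using node_in_Dg Dg_subset by fastforce
  qed (use le in simp_all)
qed

lemma node_mono: "i \<le> k \<Longrightarrow> k \<le> nparts g a b \<Longrightarrow> node g a b i \<le> node g a b k"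
proof -
  assume ik: "i \<le> k" "k \<le> nparts g a b"
  consider "i = 0" | "i = k" | "1 \<le> i \<and> i < k"
    using ik by linarith
  then show ?thesis
  proof cases
    case 1
    then show ?thesis
      using node_in_interval[OF ik(2)] by simp
  next
    case 3
    then show ?thesis
      using node_strict_mono[of i k] ik by simp
  qed simp
qed

lemma piece_le_node: "x \<in> piece g a b j \<Longrightarrow> x \<le> node g a b j"
  by (auto simp: piece_def split: if_splits)

lemma piece_gt_node: "x \<in> piece g a b j \<Longrightarrow> j \<noteq> 1 \<Longrightarrow> node g a b (j - 1) < x"
  by (simp add: piece_def)

lemma node_less_iff:
  assumes "j \<in> {1..nparts g a b}" "k \<in> {1..nparts g a b}" "x \<in> piece g a b j"
  shows "node g a b k < x \<longleftrightarrow> k < j"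
proof
  assume "node g a b k < x"
  then have "node g a b k < node g a b j"
    using piece_le_node[OF assms(3)] by linarith
  then show "k < j"
    using node_mono[of j k] assms by (meson atLeastAtMost_iff not_less)
next
  assume "k < j"
  then have "node g a b k \<le> node g a b (j - 1)"
    using assms by (intro node_mono) auto
  then show "node g a b k < x"
    using piece_gt_node[OF assms(3)] \<open>k < j\<close> assms by force
qed

lemma piece_unique:
  assumes "i \<in> {1..nparts g a b}" "j \<in> {1..nparts g a b}" "x \<in> piece g a b i" "x \<in> piece g a b j"
  shows "i = j"
proof (cases i j rule: linorder_cases)
  case less
  then show ?thesis
    using node_less_iff[of i i x] node_less_iff[of j i x] assms by auto
next
  case greater
  then show ?thesis
    using node_less_iff[of j j x] node_less_iff[of i j x] assms by auto
qed

lemma piece_subset: "j \<in> {1..nparts g a b} \<Longrightarrow> piece g a b j \<subseteq> {a..b}"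
proof -
  assume j: "j \<in> {1..nparts g a b}"
  then have "a \<le> node g a b (j - 1)" "node g a b j \<le> b"
    using node_mono[of 0 "j - 1"] node_mono[of j "nparts g a b"] by auto
  then show ?thesis
    by (auto simp: piece_def)
qed

lemma piece_nonempty: "j \<in> {1..nparts g a b} \<Longrightarrow> piece g a b j \<noteq> {}"
proof -
  assume j: "j \<in> {1..nparts g a b}"
  show ?thesis
  proof (cases "j = 1")
    case True
    then show ?thesis
      using j node_mono[of 0 1] by (simp add: piece_def)
  next
    case False
    then have "node g a b (j - 1) < node g a b j"
      using j by (intro node_strict_mono) auto
    with False show ?thesis
      by (simp add: piece_def)
  qed
qed

lemma piece_cover: "x \<in> {a..b} \<Longrightarrow> \<exists>j\<in>{1..nparts g a b}. x \<in> piece g a b j"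
proof -
  assume x: "x \<in> {a..b}"
  define j where "j = (LEAST k. 1 \<le> k \<and> x \<le> node g a b k)"
  have P: "1 \<le> nparts g a b \<and> x \<le> node g a b (nparts g a b)"
    using x nparts_pos by simp
  have j: "1 \<le> j \<and> x \<le> node g a b j"
    unfolding j_def by (rule LeastI[of _ "nparts g a b"]) (rule P)
  have "j \<le> nparts g a b"
    unfolding j_def by (rule Least_le) (rule P)
  show ?thesis
  proof (cases "j = 1")
    case True
    then show ?thesis
      using j x \<open>j \<le> nparts g a b\<close> by (auto simp: piece_def)
  next
    case False
    have "j - 1 < j"
      using j by simp
    then have "\<not> (1 \<le> j - 1 \<and> x \<le> node g a b (j - 1))"
      unfolding j_def by (rule not_less_Least)
    with False j \<open>j \<le> nparts g a b\<close> show ?thesis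
      by (intro bexI[of _ j]) (auto simp: piece_def)
  qed
qed

lemma UN_piece: "(\<Union>j\<in>{1..nparts g a b}. piece g a b j) = {a..b}"
  using piece_subset piece_cover by blast

lemma gB_eq_on_piece:
  assumes "j \<in> {1..nparts g a b}" "x \<in> piece g a b j" "y \<in> piece g a b j"
  shows "gB g a b x = gB g a b y"
proof -
  have "z < x \<longleftrightarrow> z < y" if z: "z \<in> Dg g a b" for z
  proof -
    obtain k where k: "k \<in> {1..<nparts g a b}" "z = node g a b k"
      using Dg_node[OF z] by blast
    then have "k \<in> {1..nparts g a b}"
      by simp
    then show ?thesis
      using node_less_iff[OF assms(1) _ assms(2)] node_less_iff[OF assms(1) _ assms(3)] k(2) by simp
  qed
  then have "{a..<x} \<inter> Dg g a b = {a..<y} \<inter> Dg g a b"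
    using Dg_subset by auto
  then show ?thesis
    by (simp add: gB_def)
qed

lemma gC_diff_on_piece:
  "j \<in> {1..nparts g a b} \<Longrightarrow> x \<in> piece g a b j \<Longrightarrow> y \<in> piece g a b j \<Longrightarrow>
    gC g a b x - gC g a b y = g x - g y"
  using gB_eq_on_piece[of j x y] by (simp add: gC_def)

lemma pieces_separated:
  assumes "mono_on {a..b} g"
  obtains \<delta> where "\<delta> > 0" and "\<And>i j x y. i \<in> {1..nparts g a b} \<Longrightarrow> j \<in> {1..nparts g a b} \<Longrightarrow>
    x \<in> piece g a b i \<Longrightarrow> y \<in> piece g a b j \<Longrightarrow> \<bar>g x - g y\<bar> < \<delta> \<Longrightarrow> i = j"
proof
  \<comment> \<open>the smallest jump of g; inserting 1 keeps the minimum meaningful when D_g is empty\<close>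
  define \<delta> where "\<delta> = Min (insert 1 (jump g ` Dg g a b))"
  have fin: "finite (insert 1 (jump g ` Dg g a b))"
    using finite_Dg by simp
  show "\<delta> > 0"
    unfolding \<delta>_def using fin by (simp add: Dg_def)
  have step: "\<delta> \<le> g y - g x"
    if "i \<in> {1..nparts g a b}" "j \<in> {1..nparts g a b}" "i < j" "x \<in> piece g a b i" "y \<in> piece g a b j"
    for i j x y
  proof -
    have p: "node g a b i \<in> Dg g a b"
      using that by (intro node_in_Dg) auto
    have "\<delta> \<le> jump g (node g a b i)"
      unfolding \<delta>_def using fin p by (simp add: Min_le)
    also have "\<dots> \<le> g y - g x"
    proof (rule jump_le_diff[OF assms])
      show "a \<le> node g a b i" "node g a b i < b"
        using subsetD[OF Dg_subset p] by simp_all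
      show "a \<le> x" "y \<le> b"
        using subsetD[OF piece_subset that(4)] subsetD[OF piece_subset that(5)] that(1,2) by simp_all
      show "x \<le> node g a b i"
        using piece_le_node[OF that(4)] .
      show "node g a b i < y"
        using node_less_iff[of j i y] that by auto
    qed
    finally show ?thesis .
  qed
  show "i = j"
    if "i \<in> {1..nparts g a b}" "j \<in> {1..nparts g a b}" "x \<in> piece g a b i" "y \<in> piece g a b j"
      "\<bar>g x - g y\<bar> < \<delta>" for i j x y
    using step[of i j x y] step[of j i y x] that by (cases i j rule: linorder_cases) linarith+
qed

lemma Psi_component: "j \<in> {1..nparts g a b} \<Longrightarrow> Psi g a b f j = restr (piece g a b j) f"
  by (simp add: Psi_def)

lemma Psi_in_UC:
  assumes "f \<in> UC g {a..b}" "j \<in> {1..nparts g a b}"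
  shows "Psi g a b f j \<in> UC (gC g a b) (piece g a b j)"
proof -
  have "unif_cont_wrt g (piece g a b j) f"
    using assms(1) by (intro unif_cont_wrt_subset[OF _ piece_subset[OF assms(2)]]) (simp add: UC_def)
  then have "unif_cont_wrt (gC g a b) (piece g a b j) f"
    using gC_diff_on_piece[OF assms(2)] by (subst unif_cont_wrt_cong) auto
  then show ?thesis
    using assms(2) by (simp add: Psi_component restr_in_UC_iff)
qed

lemma Psi_inj:
  assumes "f \<in> UC g {a..b}" "h \<in> UC g {a..b}" "Psi g a b f = Psi g a b h"
  shows "f = h"
proof
  fix x
  show "f x = h x"
  proof (cases "x \<in> {a..b}")
    case True
    then obtain j where "j \<in> {1..nparts g a b}" "x \<in> piece g a b j"
      using piece_cover by blast
    then show ?thesis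
      using fun_cong[OF fun_cong[OF assms(3), of j], of x] by (simp add: Psi_component restr_def)
  next
    case False
    then show ?thesis
      using assms(1,2) by (simp add: UC_def)
  qed
qed

lemma Psi_surj:
  fixes v :: "nat \<Rightarrow> real \<Rightarrow> 'a::real_normed_vector"
  assumes mono: "mono_on {a..b} g"
    and v_UC: "\<And>j. j \<in> {1..nparts g a b} \<Longrightarrow> v j \<in> UC (gC g a b) (piece g a b j)"
    and v_0: "\<And>j. j \<notin> {1..nparts g a b} \<Longrightarrow> v j = (\<lambda>_. 0)"
  shows "\<exists>f \<in> UC g {a..b}. Psi g a b f = v"
proof
  define f where "f x = (\<Sum>j\<in>{1..nparts g a b}. v j x)" for x
  have v_outside: "v j x = 0" if "j \<in> {1..nparts g a b}" "x \<notin> piece g a b j" for j x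
    using v_UC[OF that(1)] that(2) by (simp add: UC_def)
  have f_piece: "f x = v j x" if j: "j \<in> {1..nparts g a b}" and x: "x \<in> piece g a b j" for j x
  proof -
    have "(\<Sum>i\<in>{1..nparts g a b} - {j}. v i x) = 0"
      using piece_unique[OF _ j] x v_outside by (intro sum.neutral) blast
    then show ?thesis
      unfolding f_def using j by (simp add: sum.remove)
  qed
  have f_outside: "f x = 0" if "x \<notin> {a..b}" for x
    unfolding f_def using piece_subset that v_outside by (intro sum.neutral) blast
  have "unif_cont_wrt g (piece g a b j) f" if j: "j \<in> {1..nparts g a b}" for j
  proof -
    have "unif_cont_wrt (gC g a b) (piece g a b j) (v j)"
      using v_UC[OF j] by (simp add: UC_def)
    then show ?thesis
      using gC_diff_on_piece[OF j] f_piece[OF j] by (subst unif_cont_wrt_cong) auto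
  qed
  moreover obtain \<delta> where "\<delta> > 0" and "\<And>i j x y. i \<in> {1..nparts g a b} \<Longrightarrow> j \<in> {1..nparts g a b} \<Longrightarrow>
      x \<in> piece g a b i \<Longrightarrow> y \<in> piece g a b j \<Longrightarrow> \<bar>g x - g y\<bar> < \<delta> \<Longrightarrow> i = j"
    using pieces_separated[OF mono] by blast
  ultimately have "unif_cont_wrt g {a..b} f"
    unfolding UN_piece[symmetric] by (intro unif_cont_wrt_glue) auto
  with f_outside show "f \<in> UC g {a..b}"
    by (simp add: UC_def)
  show "Psi g a b f = v"
  proof (intro ext)
    fix j x
    show "Psi g a b f j x = v j x"
      using f_piece v_outside v_0 by (cases "j \<in> {1..nparts g a b}") (auto simp: Psi_def restr_def)
  qed
qed

lemma supnorm_Psi: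
  fixes f :: "real \<Rightarrow> 'a::real_normed_vector"
  assumes mono: "mono_on {a..b} g" and f: "f \<in> UC g {a..b}"
  shows "supnorm {a..b} f = Max ((\<lambda>j. supnorm (piece g a b j) (Psi g a b f j)) ` {1..nparts g a b})"
proof -
  have "g ` {a..b} \<subseteq> {g a..g b}"
    using le by (auto intro!: mono_onD[OF mono])
  then have "bounded (g ` {a..b})"
    using bounded_closed_interval bounded_subset by blast
  then have "bounded (f ` (\<Union>j\<in>{1..nparts g a b}. piece g a b j))"
    using f unfolding UN_piece UC_def by (auto intro: unif_cont_wrt_bounded)
  then have "supnorm {a..b} f = Max ((\<lambda>j. supnorm (piece g a b j) f) ` {1..nparts g a b})"
    unfolding UN_piece[symmetric] using piece_nonempty nparts_pos by (intro supnorm_UN) auto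
  also have "\<dots> = Max ((\<lambda>j. supnorm (piece g a b j) (Psi g a b f j)) ` {1..nparts g a b})"
    by (intro arg_cong[where f = Max] image_cong refl) (simp add: Psi_component supnorm_restr)
  finally show ?thesis .
qed

end

theorem mainTheorem16:
  fixes g :: "real \<Rightarrow> real" and a b :: real
    and UCg :: "(real \<Rightarrow> 'a::real_normed_field) set"
  assumes "a < b" and "derivator g a b" and "finite (Dg g a b)"
  defines "n \<equiv> nparts g a b" and "UCg \<equiv> UC g {a..b}"
  shows "(\<forall>f \<in> UCg. \<forall>j\<in>{1..n}.
            Psi g a b f j \<in> UC (gC g a b) (piece g a b j))
       \<and> (\<forall>f \<in> UCg. \<forall>h \<in> UCg. \<forall>c::'a.
            Psi g a b (\<lambda>x. c * f x + h x) = (\<lambda>j x. c * Psi g a b f j x + Psi g a b h j x))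
       \<and> (\<forall>f \<in> UCg. \<forall>h \<in> UCg. Psi g a b f = Psi g a b h \<longrightarrow> f = h)
       \<and> (\<forall>v :: nat \<Rightarrow> real \<Rightarrow> 'a. (\<forall>j\<in>{1..n}. v j \<in> UC (gC g a b) (piece g a b j))
            \<and> (\<forall>j. j \<notin> {1..n} \<longrightarrow> v j = (\<lambda>_. 0))
            \<longrightarrow> (\<exists>f \<in> UCg. Psi g a b f = v))
       \<and> (\<forall>f \<in> UCg.
            supnorm {a..b} f = Max ((\<lambda>j. supnorm (piece g a b j) (Psi g a b f j)) ` {1..n}))"
proof -
  interpret finite_jumps g a b
    using assms(1,3) by unfold_locales simp
  have mono: "mono_on {a..b} g"
    using assms(2) by (simp add: derivator_def)
  have "\<forall>f \<in> UCg. \<forall>j\<in>{1..n}. Psi g a b f j \<in> UC (gC g a b) (piece g a b j)"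
    unfolding n_def UCg_def using Psi_in_UC by blast
  moreover have "\<forall>f \<in> UCg. \<forall>h \<in> UCg. Psi g a b f = Psi g a b h \<longrightarrow> f = h"
    unfolding UCg_def using Psi_inj by blast
  moreover have "\<exists>f \<in> UCg. Psi g a b f = v"
    if "(\<forall>j\<in>{1..n}. v j \<in> UC (gC g a b) (piece g a b j)) \<and> (\<forall>j. j \<notin> {1..n} \<longrightarrow> v j = (\<lambda>_. 0))"
    for v :: "nat \<Rightarrow> real \<Rightarrow> 'a"
    unfolding UCg_def using that Psi_surj[OF mono, of v] by (simp add: n_def)
  moreover have "supnorm {a..b} f = Max ((\<lambda>j. supnorm (piece g a b j) (Psi g a b f j)) ` {1..n})"
    if "f \<in> UCg" for f
    unfolding n_def using that supnorm_Psi[OF mono] by (simp add: UCg_def)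
  ultimately show ?thesis
    by (simp add: Psi_linear)
qed

end
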